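(* Let $\nu:[0,1] \to \mathbb{R}$ be continuous with $\nu(x) > 0$ for all $x\in[0,1]$. Let $f:[0,1] \to \mathbb{R}$ be differentiable with vanishing weighted mean, $\int_0^1 f(x)\nu(x)\,dx = 0$. Then $$\int_{0}^{1}|f(x)|\,\nu(x)\, dx \leq \left(\max_{0 \leq x \leq 1}\frac{2}{\nu(x)}\,\frac{\left(\int_{0}^{x}\nu(z)\,dz\right)\left(\int_{x}^{1}\nu(z)\,dz\right)}{\int_{0}^{1}\nu(z)\,dz}\right)\int_{0}^{1}|f'(x)|\,\nu(x)\, dx,$$ and the constant is sharp: for the given weight $\nu$, no smaller constant makes this inequality hold for all such $f$. *)

theory Defs
  imports "HOL-Analysis.Analysis"
begin

text \<open>For continuous positive nu the
  function is continuous on the compact interval, so the supremum is attained (a max).\<close>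
definition weight_const :: "(real \<Rightarrow> real) \<Rightarrow> real" where
  "weight_const \<nu> = (SUP x\<in>{0..1}. 2 / \<nu> x *
      ((integral {0..x} \<nu>) * (integral {x..1} \<nu>)) / integral {0..1} \<nu>)"

definition admissible :: "(real \<Rightarrow> real) \<Rightarrow> (real \<Rightarrow> real) \<Rightarrow> (real \<Rightarrow> real) \<Rightarrow> bool" where
  "admissible \<nu> f f' \<longleftrightarrow>
     (\<forall>x\<in>{0..1}. (f has_real_derivative f' x) (at x within {0..1})) \<and>
     integral {0..1} (\<lambda>x. f x * \<nu> x) = 0"

text \<open>The inequality with constant C. The right-hand integral is taken as a
  nonnegative Lebesgue integral (possibly infinite), since f' need not be integrable.\<close>
definition poincare_ineq :: "(real \<Rightarrow> real) \<Rightarrow> real \<Rightarrow> (real \<Rightarrow> real) \<Rightarrow> (real \<Rightarrow> real) \<Rightarrow> bool" where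
  "poincare_ineq \<nu> C f f' \<longleftrightarrow>
     ennreal (integral {0..1} (\<lambda>x. \<bar>f x\<bar> * \<nu> x))
       \<le> ennreal C * (\<integral>\<^sup>+ x\<in>{0..1}. ennreal (\<bar>f' x\<bar> * \<nu> x) \<partial>lborel)"

end

theory Submission
  imports Defs
begin

text \<open>Write \<open>N x = \<integral>\<^sub>0\<^sup>x \<nu>\<close> and \<open>M = N 1\<close>. Integrating by parts against \<open>N\<close> on \<open>[0,x]\<close> and
  against \<open>M - N\<close> on \<open>[x,1]\<close>, the mean-zero condition gives
  \<open>M f(x) = \<integral>\<^sub>0\<^sup>x f' N - \<integral>\<^sub>x\<^sup>1 f' (M - N)\<close>. Bounding \<open>|f(x)|\<close> by this, integrating against
  \<open>\<nu>(x)\<close> and exchanging the order of integration weights \<open>|f'(t)|\<close> by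
  \<open>2 N(t) (M - N(t)) / M\<close>, which is \<open>\<nu>(t)\<close> times the function maximised in the constant.
  For sharpness, take a point a where that function nearly attains its maximum and a C1 ramp
  from 0 to 1 on a short interval \<open>[a,b]\<close>, shifted to weighted mean zero: then
  \<open>\<integral> |f'| \<nu> \<approx> \<nu>(a)\<close>, while \<open>\<integral> |f| \<nu> \<ge> 2 N(a) (M - N(b)) / M \<approx> 2 N(a) (M - N(a)) / M\<close>.\<close>

section \<open>Derivatives and integrals on an interval\<close>

lemma right_difference_quotient_LIMSEQ:
  fixes f g :: "real \<Rightarrow> real"
  assumes deriv: "(f has_real_derivative D) (at x within {a..b})" and x: "x \<in> {a..<b}"
    and agree: "\<And>y. y \<in> {a..b} \<Longrightarrow> g y = f y"
  shows "(\<lambda>n. (g (x + inverse (Suc n)) - g x) * Suc n) \<longlonglongrightarrow> D"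
proof -
  define y where "y n = x + inverse (real (Suc n))" for n
  have "y \<longlonglongrightarrow> x"
    unfolding y_def using tendsto_add[OF tendsto_const LIMSEQ_inverse_real_of_nat] by simp
  then have "eventually (\<lambda>n. y n < b) sequentially"
    using x by (auto simp: order_tendsto_iff)
  then have ev: "eventually (\<lambda>n. y n \<in> {a..b} - {x}) sequentially"
    by eventually_elim (use x in \<open>auto simp: y_def intro!: add_increasing2\<close>)
  with \<open>y \<longlonglongrightarrow> x\<close> have "filterlim y (at x within {a..b}) sequentially"
    by (simp add: filterlim_at)
  from filterlim_compose[OF deriv[unfolded has_field_derivative_iff] this]
  have "(\<lambda>n. (f (y n) - f x) / (y n - x)) \<longlonglongrightarrow> D"
    by (simp add: o_def)
  moreover have
    "eventually (\<lambda>n. (f (y n) - f x) / (y n - x) = (g (y n) - g x) * Suc n) sequentially"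
    using ev by eventually_elim (use x in \<open>auto simp: agree y_def divide_inverse\<close>)
  ultimately show ?thesis
    by (simp add: tendsto_cong y_def)
qed

lemma borel_measurable_indicator_derivative:
  fixes f f' :: "real \<Rightarrow> real"
  assumes "a < b"
    and deriv: "\<And>x. x \<in> {a..b} \<Longrightarrow> (f has_real_derivative f' x) (at x within {a..b})"
  shows "(\<lambda>x. indicator {a..b} x * f' x) \<in> borel_measurable borel"
proof -
  define g where "g x = f (max a (min b x))" for x
  have "continuous_on {a..b} f"
    using deriv DERIV_continuous continuous_on_eq_continuous_within by blast
  then have "continuous_on UNIV g"
    unfolding g_def
    by (rule continuous_on_compose2) (use \<open>a < b\<close> in \<open>auto intro!: continuous_intros\<close>)
  then have [measurable]: "g \<in> borel_measurable borel"
    by (rule borel_measurable_continuous_onI)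
  define q where "q n x = indicator {a..<b} x * ((g (x + inverse (Suc n)) - g x) * Suc n)" for n x
  have "q n \<in> borel_measurable borel" for n
    unfolding q_def by measurable
  moreover have "(\<lambda>n. q n x) \<longlonglongrightarrow> indicator {a..<b} x * f' x" for x
  proof (cases "x \<in> {a..<b}")
    case True
    then show ?thesis
      using right_difference_quotient_LIMSEQ[OF deriv True, of g] by (simp add: q_def g_def)
  qed (simp add: q_def)
  ultimately have [measurable]: "(\<lambda>x. indicator {a..<b} x * f' x) \<in> borel_measurable borel"
    by (rule borel_measurable_LIMSEQ_real[rotated])
  have "(\<lambda>x. indicator {a..b} x * f' x) = (\<lambda>x. indicator {a..<b} x * f' x + indicator {b} x * f' b)"
    using \<open>a < b\<close> by (auto simp: indicator_def fun_eq_iff)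
  then show ?thesis by simp
qed

lemma abs_integral_le_nn_integral:
  fixes g :: "real \<Rightarrow> real"
  assumes "g integrable_on S"
    and meas: "(\<lambda>x. indicator S x * g x) \<in> borel_measurable borel"
  shows "ennreal \<bar>integral S g\<bar> \<le> (\<integral>\<^sup>+x\<in>S. ennreal \<bar>g x\<bar> \<partial>lborel)"
proof (cases "(\<integral>\<^sup>+x\<in>S. ennreal \<bar>g x\<bar> \<partial>lborel) = \<infinity>")
  case False
  define G where "G x = indicator S x * g x" for x
  have norm_G: "(\<integral>\<^sup>+x. ennreal (norm (G x)) \<partial>lborel) = (\<integral>\<^sup>+x\<in>S. ennreal \<bar>g x\<bar> \<partial>lborel)"
    by (rule nn_integral_cong) (auto simp: G_def indicator_def)
  have G: "integrable lborel G"
  proof (rule integrableI_bounded)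
    show "G \<in> borel_measurable lborel"
      using meas by (simp add: G_def[abs_def])
    show "(\<integral>\<^sup>+x. ennreal (norm (G x)) \<partial>lborel) < \<infinity>"
      unfolding norm_G using False by (simp add: less_top)
  qed
  have "G = (\<lambda>x. if x \<in> S then g x else 0)"
    by (auto simp: G_def indicator_def)
  then have "(G has_integral integral S g) UNIV"
    using has_integral_restrict_UNIV[of S g] integrable_integral[OF assms(1)] by simp
  then have "integral S g = integral\<^sup>L lborel G"
    using has_integral_integral_lborel[OF G] has_integral_unique by blast
  then have "ennreal \<bar>integral S g\<bar> \<le> ennreal (integral\<^sup>L lborel (\<lambda>x. norm (G x)))"
    by (simp add: integral_norm_bound ennreal_leI)
  also have "\<dots> = (\<integral>\<^sup>+x. ennreal (norm (G x)) \<partial>lborel)"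
    using G by (intro nn_integral_eq_integral[symmetric]) auto
  finally show ?thesis
    by (simp only: norm_G)
qed simp

lemma integration_by_parts_Icc:
  fixes f g :: "real \<Rightarrow> real"
  assumes "u \<le> v"
    and "\<And>t. t \<in> {u..v} \<Longrightarrow> (f has_real_derivative f' t) (at t within {u..v})"
    and "\<And>t. t \<in> {u..v} \<Longrightarrow> (g has_real_derivative g' t) (at t within {u..v})"
    and "(\<lambda>t. f t * g' t) integrable_on {u..v}"
  shows "((\<lambda>t. f' t * g t) has_integral
      f v * g v - f u * g u - integral {u..v} (\<lambda>t. f t * g' t)) {u..v}"
proof -
  have "((\<lambda>t. f' t * g t + f t * g' t) has_integral f v * g v - f u * g u) {u..v}"
    using assms(1-3)
    by (intro fundamental_theorem_of_calculus)
       (auto intro!: derivative_eq_intros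
         simp: has_real_derivative_iff_has_vector_derivative[symmetric])
  from has_integral_diff[OF this integrable_integral[OF assms(4)]] show ?thesis
    by simp
qed

lemma integral_split_Icc3:
  fixes g :: "real \<Rightarrow> real"
  assumes "continuous_on {u..v} g" "u \<le> a" "a \<le> b" "b \<le> v"
  shows "integral {u..v} g = integral {u..a} g + integral {a..b} g + integral {b..v} g"
proof -
  have "g integrable_on {s..t}" if "u \<le> s" "t \<le> v" for s t
    using assms(1) that by (intro integrable_continuous_interval) (auto intro: continuous_on_subset)
  then show ?thesis
    using assms Henstock_Kurzweil_Integration.integral_combine[of u a v g]
      Henstock_Kurzweil_Integration.integral_combine[of a b v g]
    by simp
qed

lemma nn_integral_abs_mult_le:
  fixes g w :: "real \<Rightarrow> real"
  assumes "(g has_integral I) {a..b}"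
    and "\<And>t. 0 \<le> g t" and "\<And>t. t \<notin> {a..b} \<Longrightarrow> g t = 0"
    and "\<And>t. t \<in> {a..b} \<Longrightarrow> w t \<le> B" and "0 \<le> B"
  shows "(\<integral>\<^sup>+t\<in>T. ennreal (\<bar>g t\<bar> * w t) \<partial>lborel) \<le> ennreal (B * I)"
proof -
  have "(\<integral>\<^sup>+t\<in>T. ennreal (\<bar>g t\<bar> * w t) \<partial>lborel) \<le> (\<integral>\<^sup>+t\<in>{a..b}. ennreal (B * g t) \<partial>lborel)"
    using assms(2-4)
    by (intro nn_integral_mono)
       (auto simp: indicator_def mult.commute[of B] mult_left_mono ennreal_leI)
  also have "\<dots> = ennreal (B * I)"
    using assms by (intro nn_integral_has_integral_lebesgue' has_integral_mult_right) auto
  finally show ?thesis .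
qed

section \<open>A C1 ramp\<close>

lemma has_real_derivative_paste:
  fixes f g :: "real \<Rightarrow> real"
  assumes f: "\<And>x. (f has_real_derivative f' x) (at x)"
    and g: "\<And>x. (g has_real_derivative g' x) (at x)"
    and "f c = g c" "f' c = g' c"
  shows "((\<lambda>x. if x \<le> c then f x else g x) has_real_derivative
      (if x \<le> c then f' x else g' x)) (at x)"
proof -
  have "((\<lambda>x. if x \<in> {..c} then f x else g x) has_derivative
      (if x \<in> {..c} then (*) (f' x) else (*) (g' x))) (at x within {..c} \<union> {c<..})"
    using f g assms(3,4)
    by (intro has_derivative_If_within_closures)
       (auto simp: has_field_derivative_def intro: has_derivative_at_withinI)
  moreover have "{..c} \<union> {c<..} = (UNIV :: real set)"
    by auto
  ultimately show ?thesis
    by (auto simp: has_field_derivative_def if_distrib cong: if_cong)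
qed

definition smoothstep :: "real \<Rightarrow> real" where
  "smoothstep s = (if s \<le> 0 then 0 else if s \<le> 1 then 3 * s^2 - 2 * s^3 else 1)"

definition smoothstep_deriv :: "real \<Rightarrow> real" where
  "smoothstep_deriv s = (if s \<le> 0 then 0 else if s \<le> 1 then 6 * s * (1 - s) else 0)"

lemma has_real_derivative_smoothstep:
  "(smoothstep has_real_derivative smoothstep_deriv s) (at s)"
proof -
  have "((\<lambda>s. if s \<le> 1 then 3 * s^2 - 2 * s^3 else 1) has_real_derivative
      (if s \<le> 1 then 6 * s * (1 - s) else 0)) (at s)" for s :: real
    by (rule has_real_derivative_paste)
       (auto intro!: derivative_eq_intros simp: power2_eq_square algebra_simps)
  then show ?thesis
    unfolding smoothstep_def smoothstep_deriv_def
    by (intro has_real_derivative_paste[where f'="\<lambda>_. 0"]) auto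
qed

lemma smoothstep_bounds: "0 \<le> smoothstep s \<and> smoothstep s \<le> 1"
proof -
  have "0 \<le> s^2 * (3 - 2 * s) \<and> s^2 * (3 - 2 * s) \<le> 1" if "0 \<le> s" "s \<le> 1"
  proof -
    have "1 - s^2 * (3 - 2 * s) = (1 - s)^2 * (1 + 2 * s)"
      by (simp add: power2_eq_square algebra_simps)
    moreover have "0 \<le> (1 - s)^2 * (1 + 2 * s)"
      using that by simp
    ultimately show ?thesis
      using that by (intro conjI) (simp, linarith)
  qed
  then show ?thesis
    by (auto simp: smoothstep_def power2_eq_square power3_eq_cube algebra_simps)
qed

lemma smoothstep_deriv_nonneg: "0 \<le> smoothstep_deriv s"
  by (simp add: smoothstep_deriv_def)

definition ramp :: "real \<Rightarrow> real \<Rightarrow> real \<Rightarrow> real" where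
  "ramp a b x = smoothstep ((x - a) / (b - a))"

definition ramp_deriv :: "real \<Rightarrow> real \<Rightarrow> real \<Rightarrow> real" where
  "ramp_deriv a b x = smoothstep_deriv ((x - a) / (b - a)) / (b - a)"

lemma ramp_bounds: "0 \<le> ramp a b x \<and> ramp a b x \<le> 1"
  by (simp add: ramp_def smoothstep_bounds)

context
  fixes a b :: real
  assumes a_less_b: "a < b"
begin

lemma has_real_derivative_ramp: "(ramp a b has_real_derivative ramp_deriv a b x) (at x)"
proof -
  have "((\<lambda>x. (x - a) / (b - a)) has_real_derivative 1 / (b - a)) (at x)"
    using a_less_b by (auto intro!: derivative_eq_intros)
  from DERIV_chain2[OF has_real_derivative_smoothstep this] show ?thesis
    by (simp add: ramp_def[abs_def] ramp_deriv_def)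
qed

lemma ramp_eq_0: "x \<le> a \<Longrightarrow> ramp a b x = 0"
  using a_less_b by (simp add: ramp_def smoothstep_def divide_nonpos_pos)

lemma ramp_eq_1: "b \<le> x \<Longrightarrow> ramp a b x = 1"
  using a_less_b by (simp add: ramp_def smoothstep_def divide_le_0_iff)

lemma ramp_deriv_nonneg: "0 \<le> ramp_deriv a b x"
  using a_less_b smoothstep_deriv_nonneg by (simp add: ramp_deriv_def)

lemma ramp_deriv_eq_0: "x \<notin> {a..b} \<Longrightarrow> ramp_deriv a b x = 0"
  using a_less_b by (auto simp: ramp_deriv_def smoothstep_deriv_def divide_nonpos_pos)

lemma has_integral_ramp_deriv: "(ramp_deriv a b has_integral 1) {a..b}"
  using fundamental_theorem_of_calculus[of a b "ramp a b" "ramp_deriv a b"] a_less_b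
    has_real_derivative_ramp ramp_eq_0[of a] ramp_eq_1[of b]
  by (auto simp: has_real_derivative_iff_has_vector_derivative[symmetric]
      intro: has_field_derivative_at_within)

end

section \<open>The weighted inequality and its sharpness\<close>

locale positive_weight =
  fixes \<nu> :: "real \<Rightarrow> real"
  assumes continuous: "continuous_on {0..1} \<nu>"
    and positive: "\<And>x. x \<in> {0..1} \<Longrightarrow> 0 < \<nu> x"
begin

definition N :: "real \<Rightarrow> real" where
  "N x = integral {0..x} \<nu>"

abbreviation M :: real where
  "M \<equiv> N 1"

lemma integrable_weight: "0 \<le> u \<Longrightarrow> v \<le> 1 \<Longrightarrow> \<nu> integrable_on {u..v}"
  by (rule integrable_continuous_interval) (auto intro: continuous_on_subset[OF continuous])

lemma integral_weight:
  assumes "0 \<le> u" "u \<le> v" "v \<le> 1"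
  shows "integral {u..v} \<nu> = N v - N u"
  using Henstock_Kurzweil_Integration.integral_combine[of 0 u v \<nu>] integrable_weight[of 0 v] assms
  by (simp add: N_def)

lemma N_0 [simp]: "N 0 = 0"
  by (simp add: N_def)

lemma has_real_derivative_N: "x \<in> {0..1} \<Longrightarrow> (N has_real_derivative \<nu> x) (at x within {0..1})"
  unfolding N_def by (rule integral_has_real_derivative[OF continuous])

lemma continuous_on_N: "continuous_on {0..1} N"
  using has_real_derivative_N DERIV_continuous continuous_on_eq_continuous_within by blast

lemma N_strict_mono:
  assumes "0 \<le> u" "u < v" "v \<le> 1"
  shows "N u < N v"
proof -
  obtain x0 where x0: "x0 \<in> {u..v}" and min: "\<And>x. x \<in> {u..v} \<Longrightarrow> \<nu> x0 \<le> \<nu> x"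
    using continuous_attains_inf[OF compact_Icc _ continuous_on_subset[OF continuous], of u v] assms
    by auto
  have "\<nu> x0 * (v - u) \<le> integral {u..v} \<nu>"
    using integral_le[of "\<lambda>_. \<nu> x0" "{u..v}" \<nu>] integrable_weight[of u v] min assms
    by (simp add: mult.commute integrable_const_ivl)
  moreover have "0 < \<nu> x0 * (v - u)"
    using positive[of x0] x0 assms by simp
  ultimately show ?thesis
    using integral_weight[of u v] assms by simp
qed

lemma N_mono: "0 \<le> u \<Longrightarrow> u \<le> v \<Longrightarrow> v \<le> 1 \<Longrightarrow> N u \<le> N v"
  using N_strict_mono[of u v] by (cases "u = v") auto

lemma N_bounds: "t \<in> {0..1} \<Longrightarrow> 0 \<le> N t \<and> N t \<le> M"
  using N_mono[of 0 t] N_mono[of t 1] by auto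

lemma M_pos: "0 < M"
  using N_strict_mono[of 0 1] by simp

lemma borel_measurable_restricted_weight [measurable]:
  "(\<lambda>t. indicator {0..1} t * \<nu> t) \<in> borel_measurable borel"
  using borel_measurable_continuous_on_indicator[OF _ continuous] by simp

lemma borel_measurable_restricted_N [measurable]:
  "(\<lambda>t. indicator {0..1} t * N t) \<in> borel_measurable borel"
  using borel_measurable_continuous_on_indicator[OF _ continuous_on_N] by simp

lemma admissible_continuous: "admissible \<nu> f f' \<Longrightarrow> continuous_on {0..1} f"
  unfolding admissible_def using DERIV_continuous continuous_on_eq_continuous_within by blast

lemma admissible_borel_measurable:
  "admissible \<nu> f f' \<Longrightarrow> (\<lambda>t. indicator {0..1} t * f' t) \<in> borel_measurable borel"
  unfolding admissible_def by (rule borel_measurable_indicator_derivative) auto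

lemma admissible_integrable:
  "admissible \<nu> f f' \<Longrightarrow> 0 \<le> u \<Longrightarrow> v \<le> 1 \<Longrightarrow> (\<lambda>t. f t * \<nu> t) integrable_on {u..v}"
  by (rule integrable_continuous_interval)
     (auto intro!: continuous_intros intro: continuous_on_subset[OF continuous]
       continuous_on_subset[OF admissible_continuous])

lemma admissible_representation:
  assumes adm: "admissible \<nu> f f'" and x: "x \<in> {0..1}"
  shows "((\<lambda>t. f' t * N t) has_integral f x * N x - integral {0..x} (\<lambda>t. f t * \<nu> t)) {0..x}"
    and "((\<lambda>t. f' t * (M - N t)) has_integral
      integral {x..1} (\<lambda>t. f t * \<nu> t) - f x * (M - N x)) {x..1}"
    and "M * f x = integral {0..x} (\<lambda>t. f' t * N t) - integral {x..1} (\<lambda>t. f' t * (M - N t))"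
proof -
  have deriv: "(f has_real_derivative f' t) (at t within {u..v})"
    "(N has_real_derivative \<nu> t) (at t within {u..v})"
    if "0 \<le> u" "v \<le> 1" "t \<in> {u..v}" for u v t
  proof -
    have "t \<in> {0..1}" "{u..v} \<subseteq> {0..1}"
      using that by auto
    then show "(f has_real_derivative f' t) (at t within {u..v})"
      "(N has_real_derivative \<nu> t) (at t within {u..v})"
      using adm has_real_derivative_N unfolding admissible_def by (meson DERIV_subset)+
  qed
  show left: "((\<lambda>t. f' t * N t) has_integral f x * N x - integral {0..x} (\<lambda>t. f t * \<nu> t)) {0..x}"
    using integration_by_parts_Icc[of 0 x f f' N \<nu>] deriv[of 0 x]
      admissible_integrable[OF adm, of 0 x] x
    by simp
  have "((\<lambda>t. f' t * (M - N t)) has_integral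
      f 1 * (M - M) - f x * (M - N x) - integral {x..1} (\<lambda>t. f t * - \<nu> t)) {x..1}"
    using x deriv[of x 1] admissible_integrable[OF adm, of x 1]
    by (intro integration_by_parts_Icc) (auto intro!: derivative_eq_intros integrable_neg)
  then show right: "((\<lambda>t. f' t * (M - N t)) has_integral
      integral {x..1} (\<lambda>t. f t * \<nu> t) - f x * (M - N x)) {x..1}"
    by simp
  have "integral {0..x} (\<lambda>t. f t * \<nu> t) + integral {x..1} (\<lambda>t. f t * \<nu> t) = 0"
    using Henstock_Kurzweil_Integration.integral_combine[OF _ _
        admissible_integrable[OF adm, of 0 1]]
      adm x by (auto simp: admissible_def)
  then show "M * f x = integral {0..x} (\<lambda>t. f' t * N t) - integral {x..1} (\<lambda>t. f' t * (M - N t))"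
    using integral_unique[OF left] integral_unique[OF right] by (simp add: algebra_simps)
qed

text \<open>The diagonal \<open>t = x\<close> is counted in both branches; it is a null set, and
  over-counting is harmless for an upper bound.\<close>
definition green :: "real \<Rightarrow> real \<Rightarrow> real" where
  "green x t = (if t \<le> x then N t else 0) + (if x \<le> t then M - N t else 0)"

lemma green_nonneg: "t \<in> {0..1} \<Longrightarrow> 0 \<le> green x t"
  using N_bounds[of t] by (simp add: green_def)

lemma admissible_pointwise_bound:
  assumes adm: "admissible \<nu> f f'" and x: "x \<in> {0..1}"
  shows "ennreal (M * \<bar>f x\<bar>) \<le> (\<integral>\<^sup>+t\<in>{0..1}. ennreal (\<bar>f' t\<bar> * green x t) \<partial>lborel)"
proof -
  note [measurable] = admissible_borel_measurable[OF adm]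
  define G1 where "G1 t = indicator {0..x} t * (f' t * N t)" for t
  define G2 where "G2 t = indicator {x..1} t * (f' t * (M - N t))" for t
  have "G1 = (\<lambda>t. indicator {0..x} t * ((indicator {0..1} t * f' t) * (indicator {0..1} t * N t)))"
    "G2 = (\<lambda>t. indicator {x..1} t * ((indicator {0..1} t * f' t) * (M - indicator {0..1} t * N t)))"
    using x by (auto simp: G1_def G2_def indicator_def fun_eq_iff)
  then have [measurable]: "G1 \<in> borel_measurable borel" "G2 \<in> borel_measurable borel"
    by simp_all
  have "ennreal (M * \<bar>f x\<bar>) \<le> ennreal (\<bar>integral {0..x} (\<lambda>t. f' t * N t)\<bar>)
      + ennreal (\<bar>integral {x..1} (\<lambda>t. f' t * (M - N t))\<bar>)"
    using admissible_representation(3)[OF adm x] M_pos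
    by (simp add: abs_mult flip: ennreal_plus)
  also have "\<dots> \<le> (\<integral>\<^sup>+t\<in>{0..x}. ennreal \<bar>f' t * N t\<bar> \<partial>lborel)
      + (\<integral>\<^sup>+t\<in>{x..1}. ennreal \<bar>f' t * (M - N t)\<bar> \<partial>lborel)"
    using admissible_representation(1,2)[OF adm x]
    by (intro add_mono abs_integral_le_nn_integral)
       (auto intro: has_integral_integrable simp flip: G1_def G2_def)
  also have "\<dots> = (\<integral>\<^sup>+t. ennreal \<bar>G1 t\<bar> \<partial>lborel) + (\<integral>\<^sup>+t. ennreal \<bar>G2 t\<bar> \<partial>lborel)"
    by (auto intro!: arg_cong2[where f="(+)"] nn_integral_cong simp: G1_def G2_def indicator_def)
  also have "\<dots> = (\<integral>\<^sup>+t. ennreal \<bar>G1 t\<bar> + ennreal \<bar>G2 t\<bar> \<partial>lborel)"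
    by (rule nn_integral_add[symmetric]) auto
  also have "\<dots> = (\<integral>\<^sup>+t\<in>{0..1}. ennreal (\<bar>f' t\<bar> * green x t) \<partial>lborel)"
  proof (rule nn_integral_cong)
    fix t
    show "ennreal \<bar>G1 t\<bar> + ennreal \<bar>G2 t\<bar> = ennreal (\<bar>f' t\<bar> * green x t) * indicator {0..1} t"
      using x N_bounds[of t]
      by (cases "t \<in> {0..1}")
         (auto simp: G1_def G2_def green_def indicator_def abs_mult distrib_left
           simp flip: ennreal_plus)
  qed
  finally show ?thesis .
qed

lemma borel_measurable_restricted_green [measurable]:
  "(\<lambda>(x, t). indicator {0..1} t * green x t) \<in> borel_measurable (lborel \<Otimes>\<^sub>M lborel)"
proof -
  have "(\<lambda>(x, t). indicator {0..1} t * green x t) = (\<lambda>(x, t).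
      (if t \<le> x then indicator {0..1} t * N t else 0)
      + (if x \<le> t then indicator {0..1} t * M - indicator {0..1} t * N t else 0))"
    by (auto simp: green_def fun_eq_iff algebra_simps)
  then show ?thesis by simp
qed

lemma nn_integral_green:
  assumes t: "t \<in> {0..1}"
  shows "(\<integral>\<^sup>+x\<in>{0..1}. ennreal (\<nu> x * green x t) \<partial>lborel) = ennreal (2 * N t * (M - N t))"
proof -
  have weight: "(\<integral>\<^sup>+x\<in>{u..v}. ennreal (\<nu> x) \<partial>lborel) = ennreal (N v - N u)"
    if "0 \<le> u" "u \<le> v" "v \<le> 1" for u v
    using that positive integrable_integral[OF integrable_weight[of u v]]
    by (intro nn_integral_has_integral_lebesgue') (auto simp: integral_weight less_imp_le)
  have "(\<integral>\<^sup>+x\<in>{0..1}. ennreal (\<nu> x * green x t) \<partial>lborel)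
      = (\<integral>\<^sup>+x. ennreal (N t) * (ennreal (\<nu> x) * indicator {t..1} x)
          + ennreal (M - N t) * (ennreal (\<nu> x) * indicator {0..t} x) \<partial>lborel)"
    using t N_bounds[of t] positive
    by (intro nn_integral_cong)
       (auto simp: green_def indicator_def less_imp_le mult.commute[of "ennreal (\<nu> _)"]
         simp flip: ennreal_mult' ennreal_plus distrib_right)
  also have "\<dots> = ennreal (N t) * ennreal (M - N t) + ennreal (M - N t) * ennreal (N t)"
  proof -
    have "(\<lambda>x. ennreal (\<nu> x) * indicator S x)
        = (\<lambda>x. ennreal (indicator {0..1} x * \<nu> x) * indicator S x)"
      if "S \<subseteq> {0..1}" for S
      using that by (auto simp: indicator_def fun_eq_iff)
    then have [measurable]: "(\<lambda>x. ennreal (\<nu> x) * indicator {t..1} x) \<in> borel_measurable lborel"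
      "(\<lambda>x. ennreal (\<nu> x) * indicator {0..t} x) \<in> borel_measurable lborel"
      using t by simp_all
    show ?thesis
      using t weight[of t 1] weight[of 0 t] by (simp add: nn_integral_add nn_integral_cmult)
  qed
  also have "\<dots> = ennreal (2 * N t * (M - N t))"
    using t N_bounds[of t] by (simp add: ennreal_mult'[symmetric] flip: ennreal_plus)
  finally show ?thesis .
qed

definition profile :: "real \<Rightarrow> real" where
  "profile x = 2 / \<nu> x * (integral {0..x} \<nu> * integral {x..1} \<nu>) / integral {0..1} \<nu>"

lemma weight_const_eq_Sup_profile: "weight_const \<nu> = (SUP x\<in>{0..1}. profile x)"
  unfolding weight_const_def profile_def ..

lemma profile_eq: "x \<in> {0..1} \<Longrightarrow> profile x = 2 * N x * (M - N x) / (M * \<nu> x)"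
  by (simp add: profile_def integral_weight mult_ac flip: N_def)

lemma profile_mult_weight: "x \<in> {0..1} \<Longrightarrow> profile x * \<nu> x = 2 * N x * (M - N x) / M"
  using positive[of x] by (simp add: profile_eq)

lemma bdd_above_profile: "bdd_above (profile ` {0..1})"
proof -
  have "continuous_on {0..1} (\<lambda>x. 2 * N x * (M - N x) / (M * \<nu> x))"
    using positive M_pos
    by (intro continuous_intros continuous_on_N continuous) (auto simp: less_imp_le dest: positive)
  then have "continuous_on {0..1} profile"
    by (rule continuous_on_eq) (simp add: profile_eq)
  then show ?thesis
    by (intro bounded_imp_bdd_above compact_imp_bounded compact_continuous_image compact_Icc)
qed

lemma profile_le_weight_const: "x \<in> {0..1} \<Longrightarrow> profile x \<le> weight_const \<nu>"
  unfolding weight_const_eq_Sup_profile by (rule cSUP_upper[OF _ bdd_above_profile])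

lemma weight_const_pos: "0 < weight_const \<nu>"
proof -
  have "0 < profile (1/2)"
    using N_strict_mono[of 0 "1/2"] N_strict_mono[of "1/2" 1] positive[of "1/2"] M_pos
    by (simp add: profile_eq)
  then show ?thesis
    using profile_le_weight_const[of "1/2"] by simp
qed

lemma nn_integral_green_exchange:
  assumes [measurable]: "(\<lambda>t. indicator {0..1} t * g t) \<in> borel_measurable borel"
  shows "(\<integral>\<^sup>+x\<in>{0..1}. ennreal (\<nu> x / M)
      * (\<integral>\<^sup>+t\<in>{0..1}. ennreal (\<bar>g t\<bar> * green x t) \<partial>lborel) \<partial>lborel)
    = (\<integral>\<^sup>+t\<in>{0..1}. ennreal (\<bar>g t\<bar> * (profile t * \<nu> t)) \<partial>lborel)"
proof -
  define H where "H x t = ennreal (indicator {0..1} x * \<nu> x / M)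
      * ennreal (\<bar>indicator {0..1} t * g t\<bar> * (indicator {0..1} t * green x t))" for x t
  have [measurable]: "(\<lambda>(x, t). H x t) \<in> borel_measurable (lborel \<Otimes>\<^sub>M lborel)"
    unfolding H_def by measurable
  have "(\<integral>\<^sup>+x\<in>{0..1}. ennreal (\<nu> x / M)
      * (\<integral>\<^sup>+t\<in>{0..1}. ennreal (\<bar>g t\<bar> * green x t) \<partial>lborel) \<partial>lborel)
      = (\<integral>\<^sup>+x. \<integral>\<^sup>+t. H x t \<partial>lborel \<partial>lborel)"
  proof (rule nn_integral_cong)
    fix x
    have "(\<integral>\<^sup>+t\<in>{0..1}. ennreal (\<bar>g t\<bar> * green x t) \<partial>lborel)
        = (\<integral>\<^sup>+t. ennreal (\<bar>indicator {0..1} t * g t\<bar> * (indicator {0..1} t * green x t)) \<partial>lborel)"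
      by (rule nn_integral_cong) (auto simp: indicator_def)
    then show "ennreal (\<nu> x / M) * (\<integral>\<^sup>+t\<in>{0..1}. ennreal (\<bar>g t\<bar> * green x t) \<partial>lborel)
        * indicator {0..1} x = (\<integral>\<^sup>+t. H x t \<partial>lborel)"
      unfolding H_def by (cases "x \<in> {0..1}") (simp_all add: nn_integral_cmult)
  qed
  also have "\<dots> = (\<integral>\<^sup>+t. \<integral>\<^sup>+x. H x t \<partial>lborel \<partial>lborel)"
    by (rule lborel_pair.Fubini'[symmetric]) measurable
  also have "\<dots> = (\<integral>\<^sup>+t\<in>{0..1}. ennreal (\<bar>g t\<bar> * (profile t * \<nu> t)) \<partial>lborel)"
  proof (rule nn_integral_cong)
    fix t
    show "(\<integral>\<^sup>+x. H x t \<partial>lborel) = ennreal (\<bar>g t\<bar> * (profile t * \<nu> t)) * indicator {0..1} t"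
    proof (cases "t \<in> {0..1}")
      case True
      have "(\<lambda>x. ennreal (\<nu> x * green x t) * indicator {0..1} x)
          = (\<lambda>x. ennreal (indicator {0..1} x * \<nu> x * green x t))"
        by (auto simp: indicator_def)
      then have [measurable]:
        "(\<lambda>x. ennreal (\<nu> x * green x t) * indicator {0..1} x) \<in> borel_measurable borel"
        by (simp add: green_def)
      have "(\<integral>\<^sup>+x. H x t \<partial>lborel)
          = ennreal (\<bar>g t\<bar> / M) * (\<integral>\<^sup>+x\<in>{0..1}. ennreal (\<nu> x * green x t) \<partial>lborel)"
        using True M_pos positive green_nonneg[OF True]
        by (subst nn_integral_cmult[symmetric], measurable) (auto intro!: nn_integral_cong
            simp: H_def indicator_def mult_ac less_imp_le simp flip: ennreal_mult')
      also have "\<dots> = ennreal (\<bar>g t\<bar> * (profile t * \<nu> t))"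
        using True M_pos N_bounds[of t]
        by (simp add: nn_integral_green profile_mult_weight flip: ennreal_mult')
      finally show ?thesis
        using True by simp
    qed (simp add: H_def)
  qed
  finally show ?thesis .
qed

lemma nn_integral_profile_le:
  assumes [measurable]: "(\<lambda>t. indicator {0..1} t * g t) \<in> borel_measurable borel"
  shows "(\<integral>\<^sup>+t\<in>{0..1}. ennreal (\<bar>g t\<bar> * (profile t * \<nu> t)) \<partial>lborel)
    \<le> ennreal (weight_const \<nu>) * (\<integral>\<^sup>+t\<in>{0..1}. ennreal (\<bar>g t\<bar> * \<nu> t) \<partial>lborel)"
proof -
  define K where "K = weight_const \<nu>"
  have "(\<integral>\<^sup>+t\<in>{0..1}. ennreal (\<bar>g t\<bar> * (profile t * \<nu> t)) \<partial>lborel)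
      \<le> (\<integral>\<^sup>+t\<in>{0..1}. ennreal K * ennreal (\<bar>g t\<bar> * \<nu> t) \<partial>lborel)"
  proof (rule nn_integral_mono)
    fix t
    have "t \<in> {0..1} \<Longrightarrow> profile t * (\<bar>g t\<bar> * \<nu> t) \<le> K * (\<bar>g t\<bar> * \<nu> t)"
      using positive[of t] profile_le_weight_const[of t] unfolding K_def
      by (intro mult_right_mono) auto
    then show "ennreal (\<bar>g t\<bar> * (profile t * \<nu> t)) * indicator {0..1} t
        \<le> ennreal K * ennreal (\<bar>g t\<bar> * \<nu> t) * indicator {0..1} t"
      using weight_const_pos
      by (auto simp: K_def mult_ac ennreal_leI indicator_def simp flip: ennreal_mult')
  qed
  also have "\<dots> = ennreal K * (\<integral>\<^sup>+t\<in>{0..1}. ennreal (\<bar>g t\<bar> * \<nu> t) \<partial>lborel)"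
  proof -
    have "(\<lambda>t. ennreal (\<bar>g t\<bar> * \<nu> t) * indicator {0..1} t)
        = (\<lambda>t. ennreal (\<bar>indicator {0..1} t * g t\<bar> * (indicator {0..1} t * \<nu> t)))"
      by (auto simp: indicator_def)
    then have "(\<lambda>t. ennreal (\<bar>g t\<bar> * \<nu> t) * indicator {0..1} t) \<in> borel_measurable lborel"
      by simp
    from nn_integral_cmult[OF this, of "ennreal K"] show ?thesis
      by (simp add: mult.assoc)
  qed
  finally show ?thesis
    unfolding K_def .
qed

lemma poincare_ineq_weight_const:
  assumes adm: "admissible \<nu> f f'"
  shows "poincare_ineq \<nu> (weight_const \<nu>) f f'"
proof -
  have "(\<lambda>x. \<bar>f x\<bar> * \<nu> x) integrable_on {0..1}"
    by (rule integrable_continuous_interval)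
       (intro continuous_intros admissible_continuous[OF adm] continuous)
  then have "ennreal (integral {0..1} (\<lambda>x. \<bar>f x\<bar> * \<nu> x))
      = (\<integral>\<^sup>+x\<in>{0..1}. ennreal (\<bar>f x\<bar> * \<nu> x) \<partial>lborel)"
    using positive
    by (intro nn_integral_has_integral_lebesgue'[symmetric]) (auto simp: less_imp_le)
  also have "\<dots> = (\<integral>\<^sup>+x\<in>{0..1}. ennreal (\<nu> x / M) * ennreal (M * \<bar>f x\<bar>) \<partial>lborel)"
  proof (rule nn_integral_cong)
    fix x
    have "\<bar>f x\<bar> * \<nu> x = \<nu> x / M * (M * \<bar>f x\<bar>)"
      using M_pos by simp
    then show "ennreal (\<bar>f x\<bar> * \<nu> x) * indicator {0..1} x
        = ennreal (\<nu> x / M) * ennreal (M * \<bar>f x\<bar>) * indicator {0..1} x"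
      using positive[of x] M_pos by (cases "x \<in> {0..1}") (simp_all flip: ennreal_mult')
  qed
  also have "\<dots> \<le> (\<integral>\<^sup>+x\<in>{0..1}. ennreal (\<nu> x / M)
      * (\<integral>\<^sup>+t\<in>{0..1}. ennreal (\<bar>f' t\<bar> * green x t) \<partial>lborel) \<partial>lborel)"
    using admissible_pointwise_bound[OF adm]
    by (intro nn_integral_mono) (auto intro: mult_left_mono simp: indicator_def)
  also have "\<dots> = (\<integral>\<^sup>+t\<in>{0..1}. ennreal (\<bar>f' t\<bar> * (profile t * \<nu> t)) \<partial>lborel)"
    by (rule nn_integral_green_exchange[OF admissible_borel_measurable[OF adm]])
  also have "\<dots> \<le> ennreal (weight_const \<nu>) * (\<integral>\<^sup>+t\<in>{0..1}. ennreal (\<bar>f' t\<bar> * \<nu> t) \<partial>lborel)"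
    by (rule nn_integral_profile_le[OF admissible_borel_measurable[OF adm]])
  finally show ?thesis
    unfolding poincare_ineq_def .
qed

lemma admissible_centered:
  assumes deriv: "\<And>x. x \<in> {0..1} \<Longrightarrow> (S has_real_derivative S' x) (at x within {0..1})"
  shows "admissible \<nu> (\<lambda>x. S x - integral {0..1} (\<lambda>x. S x * \<nu> x) / M) S'"
proof -
  have "continuous_on {0..1} S"
    using deriv DERIV_continuous continuous_on_eq_continuous_within by blast
  then have "(\<lambda>x. S x * \<nu> x) integrable_on {0..1}"
    by (intro integrable_continuous_interval continuous_intros continuous)
  then have "integral {0..1} (\<lambda>x. S x * \<nu> x - c * \<nu> x)
      = integral {0..1} (\<lambda>x. S x * \<nu> x) - integral {0..1} (\<lambda>x. c * \<nu> x)" for c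
    using integrable_weight[of 0 1]
    by (intro Henstock_Kurzweil_Integration.integral_diff integrable_on_mult_right) auto
  then have "integral {0..1} (\<lambda>x. (S x - c) * \<nu> x) = integral {0..1} (\<lambda>x. S x * \<nu> x) - c * M"
    for c
    by (simp add: left_diff_distrib N_def)
  then show ?thesis
    using M_pos deriv by (auto simp: admissible_def intro!: derivative_eq_intros)
qed

text \<open>The centering constant c lies between \<open>(M - N b) / M\<close> and \<open>(M - N a) / M\<close>, while
  \<open>\<integral> |S - c| \<nu> \<ge> |c| N a + |1 - c| (M - N b)\<close>.\<close>
lemma centered_step_lower_bound:
  assumes ab: "0 \<le> a" "a \<le> b" "b \<le> 1"
    and cont: "continuous_on {0..1} S"
    and bounds: "\<And>x. 0 \<le> S x \<and> S x \<le> 1"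
    and S0: "\<And>x. x \<le> a \<Longrightarrow> S x = 0" and S1: "\<And>x. b \<le> x \<Longrightarrow> S x = 1"
  shows "2 * N a * (M - N b) / M
    \<le> integral {0..1} (\<lambda>x. \<bar>S x - integral {0..1} (\<lambda>x. S x * \<nu> x) / M\<bar> * \<nu> x)"
proof -
  define c where "c = integral {0..1} (\<lambda>x. S x * \<nu> x) / M"
  have weight_nonneg: "x \<in> {0..1} \<Longrightarrow> 0 \<le> \<nu> x" for x
    using positive less_imp_le by blast
  have on_left: "integral {0..a} (\<lambda>x. h (S x) * \<nu> x) = h 0 * N a" for h
  proof -
    have "integral {0..a} (\<lambda>x. h (S x) * \<nu> x) = integral {0..a} (\<lambda>x. h 0 * \<nu> x)"
      by (rule integral_cong) (simp add: S0)
    then show ?thesis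
      by (simp add: N_def)
  qed
  have on_right: "integral {b..1} (\<lambda>x. h (S x) * \<nu> x) = h 1 * (M - N b)" for h
  proof -
    have "integral {b..1} (\<lambda>x. h (S x) * \<nu> x) = integral {b..1} (\<lambda>x. h 1 * \<nu> x)"
      by (rule integral_cong) (simp add: S1)
    then show ?thesis
      using ab by (simp add: integral_weight)
  qed
  have "integral {a..b} (\<lambda>x. S x * \<nu> x) \<le> integral {a..b} \<nu>"
    using ab bounds weight_nonneg
    by (intro integral_le integrable_continuous_interval continuous_intros
        continuous_on_subset[OF cont] continuous_on_subset[OF continuous] integrable_weight)
       (auto intro: mult_left_le_one_le)
  moreover have "0 \<le> integral {a..b} (\<lambda>x. S x * \<nu> x)"
    using ab bounds weight_nonneg
    by (intro integral_nonneg integrable_continuous_interval continuous_intros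
        continuous_on_subset[OF cont] continuous_on_subset[OF continuous]) auto
  moreover have "continuous_on {0..1} (\<lambda>x. S x * \<nu> x)"
    by (intro continuous_intros cont continuous)
  ultimately have c: "M - N b \<le> c * M" "c * M \<le> M - N a"
    using integral_split_Icc3[of 0 1 "\<lambda>x. S x * \<nu> x" a b]
      on_left[of "\<lambda>s. s"] on_right[of "\<lambda>s. s"] M_pos ab
      integral_weight[of a b]
    by (auto simp: c_def)
  have "0 \<le> integral {a..b} (\<lambda>x. \<bar>S x - c\<bar> * \<nu> x)"
    using ab weight_nonneg
    by (intro integral_nonneg integrable_continuous_interval continuous_intros
        continuous_on_subset[OF cont] continuous_on_subset[OF continuous]) auto
  moreover have "continuous_on {0..1} (\<lambda>x. \<bar>S x - c\<bar> * \<nu> x)"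
    by (intro continuous_intros cont continuous)
  ultimately have "\<bar>c\<bar> * N a + \<bar>1 - c\<bar> * (M - N b) \<le> integral {0..1} (\<lambda>x. \<bar>S x - c\<bar> * \<nu> x)"
    using integral_split_Icc3[of 0 1 "\<lambda>x. \<bar>S x - c\<bar> * \<nu> x" a b] ab
      on_left[of "\<lambda>s. \<bar>s - c\<bar>"] on_right[of "\<lambda>s. \<bar>s - c\<bar>"]
    by (simp add: abs_minus_commute)
  moreover have "(M - N b) / M \<le> c" "N a / M \<le> 1 - c"
    using c M_pos by (auto simp: field_simps)
  then have "(M - N b) / M \<le> \<bar>c\<bar>" "N a / M \<le> \<bar>1 - c\<bar>"
    by auto
  then have "(M - N b) / M * N a + N a / M * (M - N b) \<le> \<bar>c\<bar> * N a + \<bar>1 - c\<bar> * (M - N b)"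
    using N_bounds[of a] N_bounds[of b] ab by (intro add_mono mult_right_mono) auto
  ultimately show ?thesis
    by (simp add: c_def field_simps)
qed

lemma short_interval_right:
  assumes "0 \<le> a" "a < 1" "0 < \<epsilon>" "0 < \<eta>"
  obtains b where "a < b" "b < 1" "\<And>t. t \<in> {a..b} \<Longrightarrow> \<nu> t \<le> \<nu> a + \<epsilon>" "N b < N a + \<eta>"
proof -
  have "a \<in> {0..1}"
    using assms by simp
  then obtain d1 where d1: "0 < d1" "\<forall>t\<in>{0..1}. dist t a < d1 \<longrightarrow> dist (\<nu> t) (\<nu> a) < \<epsilon>"
    using continuous \<open>0 < \<epsilon>\<close> unfolding continuous_on_iff by blast
  obtain d2 where d2: "0 < d2" "\<forall>t\<in>{0..1}. dist t a < d2 \<longrightarrow> dist (N t) (N a) < \<eta>"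
    using continuous_on_N \<open>0 < \<eta>\<close> \<open>a \<in> {0..1}\<close> unfolding continuous_on_iff by blast
  define \<delta> where "\<delta> = min (min d1 d2) (1 - a) / 2"
  have "0 < \<delta>" "\<delta> < d1" "\<delta> < d2" "\<delta> < 1 - a"
    using assms d1(1) d2(1) by (auto simp: \<delta>_def)
  show ?thesis
  proof (rule that[of "a + \<delta>"])
    show "a < a + \<delta>" "a + \<delta> < 1"
      using \<open>0 < \<delta>\<close> \<open>\<delta> < 1 - a\<close> by auto
    fix t
    assume "t \<in> {a..a + \<delta>}"
    then have "\<bar>\<nu> t - \<nu> a\<bar> < \<epsilon>"
      using d1(2) assms \<open>\<delta> < d1\<close> \<open>\<delta> < 1 - a\<close> by (auto simp: dist_real_def)
    then show "\<nu> t \<le> \<nu> a + \<epsilon>"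
      by simp
  next
    have "\<bar>N (a + \<delta>) - N a\<bar> < \<eta>"
      using d2(2)[rule_format, of "a + \<delta>"] assms \<open>0 < \<delta>\<close> \<open>\<delta> < d2\<close> \<open>\<delta> < 1 - a\<close>
      by (simp add: dist_real_def)
    then show "N (a + \<delta>) < N a + \<eta>"
      by simp
  qed
qed

lemma ramp_violates_poincare_ineq:
  assumes ab: "0 \<le> a" "a < b" "b \<le> 1"
    and B: "\<And>t. t \<in> {a..b} \<Longrightarrow> \<nu> t \<le> B"
    and C: "0 \<le> C" "C * B < 2 * N a * (M - N b) / M"
  shows "\<exists>f f'. admissible \<nu> f f' \<and> \<not> poincare_ineq \<nu> C f f'"
proof -
  define f where "f x = ramp a b x - integral {0..1} (\<lambda>x. ramp a b x * \<nu> x) / M" for x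
  have ramp_deriv: "(ramp a b has_real_derivative ramp_deriv a b x) (at x)" for x
    using has_real_derivative_ramp[OF \<open>a < b\<close>] .
  have adm: "admissible \<nu> f (ramp_deriv a b)"
    unfolding f_def
    by (rule admissible_centered) (rule has_field_derivative_at_within[OF ramp_deriv])
  have "continuous_on {0..1} (ramp a b)"
    using ramp_deriv by (meson DERIV_continuous continuous_at_imp_continuous_on)
  then have lower: "2 * N a * (M - N b) / M \<le> integral {0..1} (\<lambda>x. \<bar>f x\<bar> * \<nu> x)"
    unfolding f_def using ab
    by (intro centered_step_lower_bound)
       (auto simp: ramp_bounds ramp_eq_0[OF \<open>a < b\<close>] ramp_eq_1[OF \<open>a < b\<close>])
  have "0 \<le> B"
    using B[of a] positive[of a] ab by (auto intro: less_imp_le)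
  then have upper: "(\<integral>\<^sup>+t\<in>{0..1}. ennreal (\<bar>ramp_deriv a b t\<bar> * \<nu> t) \<partial>lborel) \<le> ennreal B"
    using nn_integral_abs_mult_le[OF has_integral_ramp_deriv ramp_deriv_nonneg ramp_deriv_eq_0 B]
      ab by simp
  have "\<not> poincare_ineq \<nu> C f (ramp_deriv a b)"
  proof
    assume "poincare_ineq \<nu> C f (ramp_deriv a b)"
    then have "ennreal (integral {0..1} (\<lambda>x. \<bar>f x\<bar> * \<nu> x)) \<le> ennreal C * ennreal B"
      unfolding poincare_ineq_def using upper by (meson mult_left_mono order_trans zero_le)
    then have "integral {0..1} (\<lambda>x. \<bar>f x\<bar> * \<nu> x) \<le> C * B"
      using C \<open>0 \<le> B\<close> by (simp add: ennreal_mult'[symmetric] ennreal_le_iff)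
    then show False
      using lower C(2) by simp
  qed
  with adm show ?thesis
    by blast
qed

lemma violating_pair_near:
  assumes a: "0 < a" "a < 1" and C: "0 \<le> C" "C < profile a"
  shows "\<exists>f f'. admissible \<nu> f f' \<and> \<not> poincare_ineq \<nu> C f f'"
proof -
  define p where "p = 2 * N a * (M - N a) / M"
  have "C * \<nu> a < profile a * \<nu> a"
    using C a positive[of a] by (intro mult_strict_right_mono) auto
  then have "C * \<nu> a < p"
    using a profile_mult_weight[of a] by (simp add: p_def)
  define m where "m = (C * \<nu> a + p) / 2"
  define \<epsilon> where "\<epsilon> = (m - C * \<nu> a) / (C + 1)"
  have "0 < \<epsilon>" "C * (\<nu> a + \<epsilon>) < m"
    using \<open>C * \<nu> a < p\<close> C by (auto simp: \<epsilon>_def m_def field_simps)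
  have "0 < N a"
    using N_strict_mono[of 0 a] a by simp
  define \<eta> where "\<eta> = (p - m) * M / (2 * N a)"
  have "0 < \<eta>"
    using \<open>C * \<nu> a < p\<close> \<open>0 < N a\<close> M_pos by (simp add: \<eta>_def m_def)
  have "2 * N a * (M - N a - \<eta>) / M = p - 2 * N a * \<eta> / M"
    by (simp add: p_def diff_divide_distrib right_diff_distrib)
  also have "2 * N a * \<eta> / M = p - m"
    using \<open>0 < N a\<close> M_pos by (simp add: \<eta>_def)
  finally have m: "m = 2 * N a * (M - N a - \<eta>) / M"
    by simp
  obtain b where b: "a < b" "b < 1" "\<And>t. t \<in> {a..b} \<Longrightarrow> \<nu> t \<le> \<nu> a + \<epsilon>" "N b < N a + \<eta>"
    using short_interval_right[of a \<epsilon> \<eta>] a \<open>0 < \<epsilon>\<close> \<open>0 < \<eta>\<close> by auto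
  have "m < 2 * N a * (M - N b) / M"
    using m b(4) \<open>0 < N a\<close> M_pos by (simp add: divide_strict_right_mono)
  then have "C * (\<nu> a + \<epsilon>) < 2 * N a * (M - N b) / M"
    using \<open>C * (\<nu> a + \<epsilon>) < m\<close> by linarith
  then show ?thesis
    using ramp_violates_poincare_ineq[of a b "\<nu> a + \<epsilon>" C] a b C by auto
qed

lemma weight_const_sharp:
  assumes "C < weight_const \<nu>"
  shows "\<exists>f f'. admissible \<nu> f f' \<and> \<not> poincare_ineq \<nu> C f f'"
proof -
  define C' where "C' = max C 0"
  have "C' < weight_const \<nu>"
    using assms weight_const_pos by (simp add: C'_def)
  then obtain a where a: "a \<in> {0..1}" "C' < profile a"
    using less_cSUP_iff[OF _ bdd_above_profile, of C'] unfolding weight_const_eq_Sup_profile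
    by auto
  moreover have "profile 0 = 0" "profile 1 = 0"
    by (simp_all add: profile_eq)
  moreover have "0 \<le> C'"
    by (simp add: C'_def)
  ultimately have "0 < a" "a < 1"
    by (auto simp: less_le)
  then obtain f f' where "admissible \<nu> f f'" "\<not> poincare_ineq \<nu> C' f f'"
    using violating_pair_near a \<open>0 \<le> C'\<close> by blast
  moreover have "ennreal C' = ennreal C"
    by (cases "C \<le> 0") (auto simp: C'_def ennreal_neg)
  ultimately show ?thesis
    unfolding poincare_ineq_def by auto
qed

end

theorem theorem6:
  fixes \<nu> :: "real \<Rightarrow> real"
  assumes "continuous_on {0..1} \<nu>"
    and "\<forall>x\<in>{0..1}. \<nu> x > 0"
  shows "(\<forall>f f'. admissible \<nu> f f' \<longrightarrow> poincare_ineq \<nu> (weight_const \<nu>) f f')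
       \<and> (\<forall>C < weight_const \<nu>. \<exists>f f'. admissible \<nu> f f' \<and> \<not> poincare_ineq \<nu> C f f')"
proof -
  interpret positive_weight \<nu>
    using assms by unfold_locales auto
  show ?thesis
    using poincare_ineq_weight_const weight_const_sharp by blast
qed

end
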